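(* For any real numbers $a,b$ with $a\neq\pm b$ and any natural number $n\ge1$: if $n$ is even, $\Psi(a,-b,n)=\Psi(-a,-b,n)$ and $\Phi(a,-b,n)=\Phi(-a,-b,n)$; if $n$ is odd, $\Psi(a,-b,n)=\Phi(-a,-b,n)$ and $\Phi(a,-b,n)=\Psi(-a,-b,n)$.
   Context: $\delta(m)=1$ for $m$ odd, $0$ for $m$ even. $\Psi(a,b,n)$, $\Phi(a,b,n)$ are defined by $\Psi(a,b,0)=2$, $\Psi(a,b,1)=1$, $\Psi(a,b,n+1)=(2a-b)^{\delta(n)}\Psi(a,b,n)-a\Psi(a,b,n-1)$ and $\Phi(a,b,0)=0$, $\Phi(a,b,1)=1$, $\Phi(a,b,n+1)=(2a-b)^{\delta(n+1)}\Phi(a,b,n)-a\Phi(a,b,n-1)$ for $n\ge1$. *)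

theory Defs
  imports Complex_Main
begin

definition delta :: "nat \<Rightarrow> nat" where
  "delta m = (if odd m then 1 else 0)"

fun Psi :: "real \<Rightarrow> real \<Rightarrow> nat \<Rightarrow> real" where
  "Psi a b 0 = 2"
| "Psi a b (Suc 0) = 1"
| "Psi a b (Suc (Suc n)) =
     (2*a - b) ^ delta (Suc n) * Psi a b (Suc n) - a * Psi a b n"

fun Phi :: "real \<Rightarrow> real \<Rightarrow> nat \<Rightarrow> real" where
  "Phi a b 0 = 0"
| "Phi a b (Suc 0) = 1"
| "Phi a b (Suc (Suc n)) =
     (2*a - b) ^ delta (Suc (Suc n)) * Phi a b (Suc n) - a * Phi a b n"

end

theory Submission
  imports Defs
begin

(* Eliminating the middle term from two consecutive steps of the alternating recurrence gives,
   for Psi and Phi alike, X(n+4) = -b X(n+2) - a^2 X(n): the factor 2a - b only survives as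
   (2a - b) - 2a = -b, so a enters only through a^2. Hence Psi and Phi at (a, -b) and at (-a, -b)
   obey one and the same recurrence along each parity class, and the theorem reduces to comparing
   the values at n = 0, 1, 2, 3. *)

lemma alternating_recurrence_four_step:
  fixes x :: "nat \<Rightarrow> 'a :: comm_ring_1"
  assumes rec: "\<And>n. x (n + 2) = c ^ delta (n + k) * x (n + 1) - a * x n"
  shows "x (n + 4) = (c - 2 * a) * x (n + 2) - a\<^sup>2 * x n"
proof -
  have step3: "x (n + 4) = c ^ delta (n + k + 2) * x (n + 3) - a * x (n + 2)"
    using rec[of "n + 2"] by (simp add: ac_simps numeral_eq_Suc)
  have step2: "x (n + 3) = c ^ delta (n + k + 1) * x (n + 2) - a * x (n + 1)"
    using rec[of "n + 1"] by (simp add: ac_simps numeral_eq_Suc)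
  have step1: "x (n + 2) = c ^ delta (n + k) * x (n + 1) - a * x n"
    using rec[of n] by simp
  show ?thesis
  proof (cases "odd (n + k)")
    case True
    then have "delta (n + k) = 1" "delta (n + k + 1) = 0" "delta (n + k + 2) = 1"
      by (simp_all add: delta_def)
    then have "x (n + 4) = c * (x (n + 2) - a * x (n + 1)) - a * x (n + 2)"
      and "c * x (n + 1) = x (n + 2) + a * x n"
      using step1 step2 step3 by simp_all
    then show ?thesis
      by (simp add: power2_eq_square algebra_simps)
  next
    case False
    then have "delta (n + k) = 0" "delta (n + k + 1) = 1" "delta (n + k + 2) = 0"
      by (simp_all add: delta_def)
    then have "x (n + 4) = c * x (n + 2) - a * x (n + 1) - a * x (n + 2)"
      and "x (n + 1) = x (n + 2) + a * x n"
      using step1 step2 step3 by simp_all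
    then show ?thesis
      by (simp add: power2_eq_square algebra_simps)
  qed
qed

lemma Psi_four_step: "Psi a b (n + 4) = - b * Psi a b (n + 2) - a\<^sup>2 * Psi a b n"
  using alternating_recurrence_four_step[of "Psi a b" "2 * a - b" 1 a n]
  by (simp add: numeral_eq_Suc)

lemma Phi_four_step: "Phi a b (n + 4) = - b * Phi a b (n + 2) - a\<^sup>2 * Phi a b n"
  using alternating_recurrence_four_step[of "Phi a b" "2 * a - b" 2 a n]
  by (simp add: numeral_eq_Suc)

lemma Psi_initial_values: "Psi a b 2 = - b" "Psi a b 3 = - a - b"
  by (simp add: numeral_2_eq_2 delta_def) (simp add: numeral_3_eq_3 delta_def)

lemma Phi_initial_values: "Phi a b 2 = 1" "Phi a b 3 = a - b"
  by (simp add: numeral_2_eq_2 delta_def) (simp add: numeral_3_eq_3 delta_def)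

lemma two_step_recurrence_eq:
  fixes f g :: "nat \<Rightarrow> 'a :: ring"
  assumes "\<And>n. f (n + 4) = p * f (n + 2) - q * f n"
    and "\<And>n. g (n + 4) = p * g (n + 2) - q * g n"
    and "f k = g k" and "f (k + 2) = g (k + 2)"
  shows "f (k + 2 * j) = g (k + 2 * j)"
proof (induction j rule: nat_less_induct)
  case (1 j)
  show ?case
  proof (cases "j < 2")
    case True
    then show ?thesis using assms(3,4) by (cases j) auto
  next
    case False
    then obtain i where j: "j = i + 2" by (metis add.commute le_Suc_ex not_less)
    have "f (k + 2 * i) = g (k + 2 * i)" "f (k + 2 * i + 2) = g (k + 2 * i + 2)"
      using "1" j by (auto simp: algebra_simps)
    then have "f (k + 2 * i + 4) = g (k + 2 * i + 4)"
      using assms(1,2)[of "k + 2 * i"] by simp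
    moreover have "k + 2 * j = k + 2 * i + 4"
      using j by simp
    ultimately show ?thesis by (simp only:)
  qed
qed

theorem theorem13p2:
  fixes a b :: real and n :: nat
  assumes "a \<noteq> b" and "a \<noteq> - b" and "n \<ge> 1"
  shows "(even n \<longrightarrow> Psi a (-b) n = Psi (-a) (-b) n \<and> Phi a (-b) n = Phi (-a) (-b) n) \<and>
         (odd n \<longrightarrow> Psi a (-b) n = Phi (-a) (-b) n \<and> Phi a (-b) n = Psi (-a) (-b) n)"
proof -
  note eq = two_step_recurrence_eq[where p = b and q = "a\<^sup>2"]
  have "Psi a (-b) (2 * j) = Psi (-a) (-b) (2 * j)" for j
    using eq[of "Psi a (-b)" "Psi (-a) (-b)" 0 j] by (simp add: Psi_four_step Psi_initial_values delta_def)
  moreover have "Phi a (-b) (2 * j) = Phi (-a) (-b) (2 * j)" for j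
    using eq[of "Phi a (-b)" "Phi (-a) (-b)" 0 j] by (simp add: Phi_four_step Phi_initial_values delta_def)
  moreover have "Psi a (-b) (1 + 2 * j) = Phi (-a) (-b) (1 + 2 * j)" for j
    using eq[of "Psi a (-b)" "Phi (-a) (-b)" 1 j]
    by (simp add: Psi_four_step Phi_four_step Psi_initial_values Phi_initial_values delta_def)
  moreover have "Phi a (-b) (1 + 2 * j) = Psi (-a) (-b) (1 + 2 * j)" for j
    using eq[of "Phi a (-b)" "Psi (-a) (-b)" 1 j]
    by (simp add: Psi_four_step Phi_four_step Psi_initial_values Phi_initial_values delta_def)
  ultimately show ?thesis
    by (metis evenE oddE add.commute)
qed

end
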